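(* Let $\mathcal{X}=\mathcal{X}^{(1)}\times\cdots\times\mathcal{X}^{(d)}$ with each $\mathcal{X}^{(i)}$ finite, let $\pi\in\mathcal{P}(\mathcal{X})$, $M\in\mathcal{L}(\mathcal{X})$, and $M_i,L_i\in\mathcal{L}(\mathcal{X}^{(i)})$ for $i\in\{1,\dots,d\}$. Let $f:\mathbb{R}^+\to\mathbb{R}$ be convex with $f(1)=0$. 1. (Non-negativity) $D_f^{\pi}(M\|\otimes_{i=1}^d L_i)\ge 0$. If moreover $\min_{x\in\mathcal{X}}\pi(x)>0$, equality holds if and only if $M=\otimes_{i=1}^d L_i$. 2. (Convexity) For fixed $L_i$, the map $\mathcal{L}(\mathcal{X})\ni M\mapsto D_f^{\pi}(M\|\otimes_{i=1}^d L_i)$ is convex. 3. (Chain rule) If $\pi=\otimes_{i=1}^d\pi^{(i)}$ with $\pi^{(i)}\in\mathcal{P}(\mathcal{X}^{(i)})$, then $D_{KL}^{\pi}(\otimes_{i=1}^d M_i\|\otimes_{i=1}^d L_i)=\sum_{i=1}^d D_{KL}^{\pi^{(i)}}(M_i\|L_i)$. 4. (Hellinger bounds) If $f(t)=(\sqrt t-1)^2$ and $\pi=\otimes_{i=1}^d\pi^{(i)}$, then $\max_{i} D_f^{\pi^{(i)}}(M_i\|L_i)\le D_f^{\pi}(\otimes_{i=1}^d M_i\|\otimes_{i=1}^d L_i)\le\sum_{i=1}^d D_f^{\pi^{(i)}}(M_i\|L_i)$. 5. (Bisection) If $\pi=\otimes_{i=1}^d\pi^{(i)}$, $M$ is $\pi$-stationary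 and each $L_i$ is $\pi^{(i)}$-stationary, then $D_f^{\pi}(M\|\otimes_{i=1}^d L_i)=D_f^{\pi}(M^*\|\otimes_{i=1}^d L_i^* )$. In particular, if each $L_i$ is $\pi^{(i)}$-reversible, then $D_f^{\pi}(M\|\otimes_{i=1}^d L_i)=D_f^{\pi}(M^*\|\otimes_{i=1}^d L_i)$.
   Context: $\mathcal{P}(\Omega)$ is the set of probability masses on a finite set $\Omega$ and $\mathcal{L}(\Omega)$ the set of transition matrices on $\Omega$. For $f$ convex with $f(1)=0$, $\pi\in\mathcal{P}(\mathcal{X})$, $M,L\in\mathcal{L}(\mathcal{X})$: $D_f^{\pi}(M\|L):=\sum_{x}\pi(x)\sum_y L(x,y)f\big(M(x,y)/L(x,y)\big)$, with conventions $0f(0/0):=0$, $0f(a/0):=af'(+\infty)$ for $a>0$ where $f'(+\infty):=\lim_{x\to0^+}xf(1/x)$, and $0\cdot\infty:=0$. $D_{KL}^\pi$ denotes the case $f(t)=t\ln t$. The tensor product of $M_i\in\mathcal{L}(\mathcal{X}^{(i)})$ is $(\otimes_i M_i)(x,y)=\prod_i M_i(x^i,y^i)$ for $x=(x^1,\dots,x^d)$, $y=(y^1,\dots,y^d)$; similarly $\otimes_i\pi^{(i)}$ is the product measure. $P$ is $\pi$-stationary if $\pi P=\pi$ and $\pi$-reversible if $\pi(x)P(x,y)=\pi(y)P(y,x)$ for all $x,y$. For $\pi$-stationary $P$, its time reversal is $P^*(x,y)=\frac{\pi(y)}{\pi(x)}P(y,x)$ (and $L_i^*$ is the time reversal of $L_i$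 with respect to $\pi^{(i)}$).
   Formalization: The equality clause of part 1 needs f strictly convex at 1: f(1) < t f(a)+(1-t) f(b) whenever 0<=a<1<b, 0<t<1 and ta+(1-t)b=1; f is convex on [0, infinity). Each condition added here is assumed in the paper as well or is needed for the statement above to hold. *)

theory Defs
  imports "HOL-Analysis.Analysis"
begin

text \<open>Probability masses and transition matrices on a finite set; only the
values on the carrier matter.\<close>

definition prob_mass :: "'x set \<Rightarrow> ('x \<Rightarrow> real) \<Rightarrow> bool" where
  "prob_mass \<Omega> p \<longleftrightarrow> (\<forall>x\<in>\<Omega>. 0 \<le> p x) \<and> (\<Sum>x\<in>\<Omega>. p x) = 1"

definition trans_mat :: "'x set \<Rightarrow> ('x \<Rightarrow> 'x \<Rightarrow> real) \<Rightarrow> bool" where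
  "trans_mat \<Omega> P \<longleftrightarrow> (\<forall>x\<in>\<Omega>. \<forall>y\<in>\<Omega>. 0 \<le> P x y) \<and> (\<forall>x\<in>\<Omega>. (\<Sum>y\<in>\<Omega>. P x y) = 1)"

definition fprime_inf :: "(real \<Rightarrow> real) \<Rightarrow> ereal" where
  "fprime_inf f = Lim (at_right 0) (\<lambda>x. ereal (x * f (1 / x)))"

definition fterm :: "(real \<Rightarrow> real) \<Rightarrow> real \<Rightarrow> real \<Rightarrow> ereal" where
  "fterm f a b = (if b = 0 then (if a = 0 then 0 else ereal a * fprime_inf f)
                  else ereal (b * f (a / b)))"

text \<open>D_f^pi(M || L); the ereal product realises the convention 0 * infinity = 0.\<close>
definition fdiv :: "(real \<Rightarrow> real) \<Rightarrow> 'x set \<Rightarrow> ('x \<Rightarrow> real) \<Rightarrow>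
    ('x \<Rightarrow> 'x \<Rightarrow> real) \<Rightarrow> ('x \<Rightarrow> 'x \<Rightarrow> real) \<Rightarrow> ereal" where
  "fdiv f \<Omega> \<pi> M L = (\<Sum>x\<in>\<Omega>. ereal (\<pi> x) * (\<Sum>y\<in>\<Omega>. fterm f (M x y) (L x y)))"

definition prod_space :: "nat \<Rightarrow> (nat \<Rightarrow> 'a set) \<Rightarrow> (nat \<Rightarrow> 'a) set" where
  "prod_space d S = PiE {1..d} S"

definition tensor_mat :: "nat \<Rightarrow> (nat \<Rightarrow> 'a \<Rightarrow> 'a \<Rightarrow> real) \<Rightarrow> (nat \<Rightarrow> 'a) \<Rightarrow> (nat \<Rightarrow> 'a) \<Rightarrow> real" where
  "tensor_mat d Ls = (\<lambda>x y. \<Prod>i\<in>{1..d}. Ls i (x i) (y i))"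

definition tensor_mass :: "nat \<Rightarrow> (nat \<Rightarrow> 'a \<Rightarrow> real) \<Rightarrow> (nat \<Rightarrow> 'a) \<Rightarrow> real" where
  "tensor_mass d ps = (\<lambda>x. \<Prod>i\<in>{1..d}. ps i (x i))"

definition stationary :: "'x set \<Rightarrow> ('x \<Rightarrow> real) \<Rightarrow> ('x \<Rightarrow> 'x \<Rightarrow> real) \<Rightarrow> bool" where
  "stationary \<Omega> \<pi> P \<longleftrightarrow> (\<forall>y\<in>\<Omega>. (\<Sum>x\<in>\<Omega>. \<pi> x * P x y) = \<pi> y)"

definition reversible :: "'x set \<Rightarrow> ('x \<Rightarrow> real) \<Rightarrow> ('x \<Rightarrow> 'x \<Rightarrow> real) \<Rightarrow> bool" where
  "reversible \<Omega> \<pi> P \<longleftrightarrow> (\<forall>x\<in>\<Omega>. \<forall>y\<in>\<Omega>. \<pi> x * P x y = \<pi> y * P y x)"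

definition time_rev :: "('x \<Rightarrow> real) \<Rightarrow> ('x \<Rightarrow> 'x \<Rightarrow> real) \<Rightarrow> 'x \<Rightarrow> 'x \<Rightarrow> real" where
  "time_rev \<pi> P = (\<lambda>x y. \<pi> y * P y x / \<pi> x)"

definition KL_fun :: "real \<Rightarrow> real" where
  "KL_fun t = t * ln t"

definition hellinger_fun :: "real \<Rightarrow> real" where
  "hellinger_fun t = (sqrt t - 1) ^ 2"

text \<open>Strict convexity of f at 1 (needed for the equality case of non-negativity).\<close>
definition strictly_convex_at_1 :: "(real \<Rightarrow> real) \<Rightarrow> bool" where
  "strictly_convex_at_1 f \<longleftrightarrow> (\<forall>a b t. 0 \<le> a \<and> a < 1 \<and> 1 < b \<and> 0 < t \<and> t < 1 \<and>
      t * a + (1 - t) * b = 1 \<longrightarrow> f 1 < t * f a + (1 - t) * f b)"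

end

theory Submission
  imports Defs
begin

text \<open>
  Every summand of \<open>D\<^sub>f\<close> is the perspective \<open>(a, b) \<mapsto> b f(a/b)\<close> of \<open>f\<close>, extended to
  \<open>b = 0\<close> by the recession slope \<open>f'(\<infinity>)\<close>.  The perspective is positively homogeneous and
  subadditive; Jensen's inequality for row sums then gives non-negativity (and, with strict
  convexity at 1, the equality case by lumping a row into two points), and subadditivity gives
  convexity in \<open>M\<close>.

  For tensor products, sums over the product space factor into products of sums.  The squared
  Hellinger divergence is \<open>2 - 2 B\<close> for a Bhattacharyya coefficient \<open>B \<in> [0, 1]\<close> that is
  multiplicative, so the bounds become \<open>max\<^sub>i (1 - B\<^sub>i) \<le> 1 - \<Prod>\<^sub>i B\<^sub>i \<le> \<Sum>\<^sub>i (1 - B\<^sub>i)\<close>.  The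
  Kullback-Leibler log-likelihood ratio of a tensor product is the sum of those of its factors,
  and each term marginalises to the corresponding factor; both sides are infinite as soon as one
  factor fails to be absolutely continuous.  Bisection is the substitution
  \<open>(x, y) \<mapsto> (y, x)\<close> together with homogeneity, stationarity ensuring that states of mass zero
  are never entered from the support, and the time reversal of a tensor product being the tensor
  product of the time reversals.
\<close>

section \<open>The recession slope\<close>

lemma sum_distrib_left_ereal:
  "0 \<le> c \<Longrightarrow> ereal c * sum h A = (\<Sum>x\<in>A. ereal c * h x)"
  using sum_distrib_right_ereal[of c h A] by (simp add: mult.commute)

lemma convex_on_slope_mono:
  fixes f :: "real \<Rightarrow> real"
  assumes "convex_on {0..} f" "0 \<le> u" "u < v" "v < w"
  shows "(f v - f u) / (v - u) \<le> (f w - f u) / (w - u)"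
proof -
  have flip: "(f u - f z) / (u - z) = (f z - f u) / (z - u)" for z
    by (metis minus_diff_eq minus_divide_divide)
  show ?thesis
    using convex_on_slope_le(1)[OF assms(1), of u w v] assms(2-) by (simp add: flip)
qed

lemma tendsto_fprime_inf:
  fixes f :: "real \<Rightarrow> real"
  assumes f: "convex_on {0..} f"
  shows "((\<lambda>x. ereal (x * f (1 / x))) \<longlongrightarrow> fprime_inf f) (at_right 0)"
proof -
  \<comment> \<open>With \<open>t = 1/x\<close>: \<open>x f(1/x) = slope t + x f 0\<close>, and chord slopes from 0 increase with \<open>t\<close>.\<close>
  define slope where "slope t = (f t - f 0) / t" for t
  have slope_mono: "slope s \<le> slope t" if "0 < s" "s \<le> t" for s t
    using convex_on_slope_mono[OF f, of 0 s t] that by (cases "s = t") (auto simp: slope_def)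
  define l where "l = (SUP t\<in>{0<..}. ereal (slope t))"
  have "((\<lambda>x. ereal (slope (1 / x))) \<longlongrightarrow> l) (at_right 0)"
  proof (rule increasing_tendsto)
    show "\<forall>\<^sub>F x in at_right 0. ereal (slope (1 / x)) \<le> l"
      using eventually_at_right_real[of 0 1]
      by (rule eventually_mono) (auto simp: l_def intro!: SUP_upper)
  next
    fix y assume "y < l"
    then obtain t where t: "0 < t" "y < ereal (slope t)"
      unfolding l_def by (auto simp: less_SUP_iff)
    have "\<forall>\<^sub>F x in at_right 0. x \<in> {0<..<1 / t}"
      using t by (intro eventually_at_right_real) simp
    then show "\<forall>\<^sub>F x in at_right 0. y < ereal (slope (1 / x))"
    proof (rule eventually_mono)
      fix x assume "x \<in> {0<..<1 / t}"
      then have "slope t \<le> slope (1 / x)"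
        using t by (intro slope_mono) (auto simp: field_simps)
      then show "y < ereal (slope (1 / x))"
        using t(2) by (meson ereal_less_eq(3) order_less_le_trans)
    qed
  qed
  moreover have "((\<lambda>x. ereal (x * f 0)) \<longlongrightarrow> ereal 0) (at_right 0)"
    by (intro tendsto_ereal) (auto intro!: tendsto_eq_intros)
  moreover have "ereal (slope 1) \<le> l"
    unfolding l_def by (rule SUP_upper) auto
  ultimately have "((\<lambda>x. ereal (slope (1 / x)) + ereal (x * f 0)) \<longlongrightarrow> l + ereal 0) (at_right 0)"
    by (intro tendsto_add_ereal_nonneg) auto
  then have "((\<lambda>x. ereal (slope (1 / x) + x * f 0)) \<longlongrightarrow> l) (at_right 0)"
    by simp
  then have lim: "((\<lambda>x. ereal (x * f (1 / x))) \<longlongrightarrow> l) (at_right 0)"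
  proof (rule Lim_transform_eventually)
    show "\<forall>\<^sub>F x in at_right 0. ereal (slope (1 / x) + x * f 0) = ereal (x * f (1 / x))"
      using eventually_at_right_real[OF zero_less_one]
      by (rule eventually_mono) (auto simp: slope_def field_simps)
  qed
  then have "fprime_inf f = l"
    unfolding fprime_inf_def by (intro tendsto_Lim) auto
  with lim show ?thesis by simp
qed

lemma fprime_inf_ge_slope:
  fixes f :: "real \<Rightarrow> real"
  assumes f: "convex_on {0..} f" and "0 \<le> u" "u < w"
  shows "ereal ((f w - f u) / (w - u)) \<le> fprime_inf f"
proof -
  define \<sigma> where "\<sigma> = (f w - f u) / (w - u)"
  \<comment> \<open>With \<open>t = 1/x > w\<close>: \<open>f t \<ge> f u + \<sigma> (t - u)\<close>, by monotonicity of chord slopes.\<close>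
  have "\<forall>\<^sub>F x in at_right 0. x \<in> {0<..<1 / w}"
    using assms by (intro eventually_at_right_real) simp
  then have below: "\<forall>\<^sub>F x in at_right 0. ereal (x * f u + \<sigma> * (1 - x * u)) \<le> ereal (x * f (1 / x))"
  proof (rule eventually_mono)
    fix x assume x: "x \<in> {0<..<1 / w}"
    then have t: "w < 1 / x"
      using assms by (auto simp: field_simps)
    have "\<sigma> \<le> (f (1 / x) - f u) / (1 / x - u)"
      unfolding \<sigma>_def using convex_on_slope_mono[OF f assms(2,3) t] .
    then have "\<sigma> * (1 / x - u) \<le> f (1 / x) - f u"
      using t assms by (simp add: pos_le_divide_eq)
    then have "x * (\<sigma> * (1 / x - u)) \<le> x * (f (1 / x) - f u)"
      using x by (intro mult_left_mono) auto
    then show "ereal (x * f u + \<sigma> * (1 - x * u)) \<le> ereal (x * f (1 / x))"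
      using x by (simp add: algebra_simps)
  qed
  have "((\<lambda>x. ereal (x * f u + \<sigma> * (1 - x * u))) \<longlongrightarrow> ereal \<sigma>) (at_right 0)"
    by (intro tendsto_ereal tendsto_eq_intros) auto
  then have "ereal \<sigma> \<le> fprime_inf f"
    by (rule tendsto_le[OF trivial_limit_at_right_real tendsto_fprime_inf[OF f] _ below])
  then show ?thesis by (simp add: \<sigma>_def)
qed

lemma fprime_inf_neq_minf:
  "convex_on {0..} f \<Longrightarrow> fprime_inf f \<noteq> -\<infinity>"
  using fprime_inf_ge_slope[of f 0 1] by auto

lemma convex_on_le_fprime_inf:
  fixes f :: "real \<Rightarrow> real"
  assumes f: "convex_on {0..} f" and l: "fprime_inf f = ereal l" and "0 \<le> u" "0 \<le> v"
  shows "f (u + v) \<le> f u + v * l"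
proof (cases "v = 0")
  case False
  then have "(f (u + v) - f u) / v \<le> l"
    using fprime_inf_ge_slope[OF f, of u "u + v"] assms by simp
  then show ?thesis
    using False assms by (simp add: divide_le_eq mult.commute)
qed simp

section \<open>The perspective of \<open>f\<close>\<close>

lemma fterm_zero_zero [simp]: "fterm f 0 0 = 0"
  by (simp add: fterm_def)

lemma fterm_zero_right: "fterm f a 0 = ereal a * fprime_inf f"
  by (simp add: fterm_def)

lemma fterm_nonzero_right: "b \<noteq> 0 \<Longrightarrow> fterm f a b = ereal (b * f (a / b))"
  by (simp add: fterm_def)

lemma fterm_diag: "f 1 = 0 \<Longrightarrow> fterm f a a = 0"
  by (simp add: fterm_def)

lemma fterm_scale: "0 < c \<Longrightarrow> fterm f (c * a) (c * b) = ereal c * fterm f a b"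
  by (auto simp: fterm_def mult.assoc[symmetric])

lemma fterm_add_singular_le:
  fixes f :: "real \<Rightarrow> real"
  assumes f: "convex_on {0..} f" and "0 \<le> a" "0 \<le> a'" "0 \<le> b"
  shows "fterm f (a + a') b \<le> fterm f a b + fterm f a' 0"
proof (cases "b = 0")
  case True
  then show ?thesis
    using assms by (simp add: fterm_zero_right ereal_left_distrib flip: plus_ereal.simps)
next
  case False
  then have b: "0 < b" using assms by simp
  show ?thesis
  proof (cases "fprime_inf f")
    case (real l)
    have "f (a / b + a' / b) \<le> f (a / b) + a' / b * l"
      using convex_on_le_fprime_inf[OF f real, of "a / b" "a' / b"] assms b by simp
    then have "b * f (a / b + a' / b) \<le> b * (f (a / b) + a' / b * l)"
      using b by (intro mult_left_mono) auto
    then show ?thesis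
      using b real by (simp add: fterm_nonzero_right fterm_zero_right add_divide_distrib algebra_simps)
  next
    case PInf
    then show ?thesis
      using b assms by (cases "a' = 0") (auto simp: fterm_nonzero_right fterm_zero_right)
  qed (use fprime_inf_neq_minf[OF f] in simp)
qed

lemma fterm_add_le:
  fixes f :: "real \<Rightarrow> real"
  assumes f: "convex_on {0..} f"
    and a1: "0 \<le> a1" and a2: "0 \<le> a2" and b1: "0 \<le> b1" and b2: "0 \<le> b2"
  shows "fterm f (a1 + a2) (b1 + b2) \<le> fterm f a1 b1 + fterm f a2 b2"
proof (cases "b1 = 0 \<or> b2 = 0")
  case True
  then show ?thesis
    using fterm_add_singular_le[OF f a1 a2 b1] fterm_add_singular_le[OF f a2 a1 b2]
    by (auto simp: add.commute)
next
  case False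
  then have b1p: "0 < b1" and b2p: "0 < b2"
    using b1 b2 by auto
  define B where "B = b1 + b2"
  have B: "0 < B"
    using b1p b2p by (simp add: B_def)
  have "f ((1 - b2 / B) *\<^sub>R (a1 / b1) + (b2 / B) *\<^sub>R (a2 / b2))
      \<le> (1 - b2 / B) * f (a1 / b1) + (b2 / B) * f (a2 / b2)"
    using a1 a2 b1p b2p by (intro convex_onD[OF f]) (auto simp: B_def)
  moreover have "1 - b2 / B = b1 / B"
    using B by (simp add: B_def field_simps)
  ultimately have "f ((a1 + a2) / B) \<le> b1 / B * f (a1 / b1) + b2 / B * f (a2 / b2)"
    using b1p b2p by (simp add: add_divide_distrib)
  then have "B * f ((a1 + a2) / B) \<le> b1 * f (a1 / b1) + b2 * f (a2 / b2)"
    using B by (simp add: field_simps)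
  then show ?thesis
    using B b1p b2p by (simp add: fterm_nonzero_right B_def)
qed

lemma fterm_convex_left:
  fixes f :: "real \<Rightarrow> real"
  assumes f: "convex_on {0..} f" and "0 \<le> a1" "0 \<le> a2" "0 \<le> b" "0 \<le> t" "t \<le> 1"
  shows "fterm f (t * a1 + (1 - t) * a2) b \<le> ereal t * fterm f a1 b + ereal (1 - t) * fterm f a2 b"
proof (cases "t = 0 \<or> t = 1")
  case False
  then have t: "0 < t" "0 < 1 - t"
    using assms by auto
  have "fterm f (t * a1 + (1 - t) * a2) (t * b + (1 - t) * b)
      \<le> fterm f (t * a1) (t * b) + fterm f ((1 - t) * a2) ((1 - t) * b)"
    using assms by (intro fterm_add_le[OF f]) auto
  moreover have "t * b + (1 - t) * b = b"
    by (simp add: algebra_simps)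
  ultimately show ?thesis
    using fterm_scale[OF t(1)] fterm_scale[OF t(2)] by simp
qed (auto simp: zero_ereal_def[symmetric])

lemma fterm_sum_le:
  fixes f :: "real \<Rightarrow> real"
  assumes f: "convex_on {0..} f" and "finite A"
    and "\<And>y. y \<in> A \<Longrightarrow> 0 \<le> a y" "\<And>y. y \<in> A \<Longrightarrow> 0 \<le> b y"
  shows "fterm f (\<Sum>y\<in>A. a y) (\<Sum>y\<in>A. b y) \<le> (\<Sum>y\<in>A. fterm f (a y) (b y))"
  using assms(2-)
proof (induction A rule: finite_induct)
  case (insert x F)
  then have "fterm f (\<Sum>y\<in>insert x F. a y) (\<Sum>y\<in>insert x F. b y)
      \<le> fterm f (a x) (b x) + fterm f (\<Sum>y\<in>F. a y) (\<Sum>y\<in>F. b y)"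
    by (simp add: fterm_add_le[OF f] sum_nonneg)
  also have "\<dots> \<le> fterm f (a x) (b x) + (\<Sum>y\<in>F. fterm f (a y) (b y))"
    using insert by (intro add_left_mono) auto
  finally show ?case
    using insert by simp
qed simp

lemma fterm_sum_nonneg:
  fixes f :: "real \<Rightarrow> real"
  assumes f: "convex_on {0..} f" and "f 1 = 0" and "finite A"
    and "\<And>y. y \<in> A \<Longrightarrow> 0 \<le> a y" "\<And>y. y \<in> A \<Longrightarrow> 0 \<le> b y"
    and "(\<Sum>y\<in>A. a y) = 1" "(\<Sum>y\<in>A. b y) = 1"
  shows "0 \<le> (\<Sum>y\<in>A. fterm f (a y) (b y))"
  using fterm_sum_le[OF f, of A a b] fterm_diag[of f 1] assms by (simp add: zero_ereal_def)

lemma fterm_two_point_pos: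
  fixes f :: "real \<Rightarrow> real"
  assumes f: "convex_on {0..} f" and f1: "f 1 = 0" and sc: "strictly_convex_at_1 f"
    and "0 \<le> a1" "a1 < b1" "0 \<le> b2" "a1 + a2 = 1" "b1 + b2 = 1"
  shows "0 < fterm f a1 b1 + fterm f a2 b2"
proof (cases "b2 = 0")
  case False
  then have b: "0 < b1" "0 < b2"
    using assms by auto
  have b1b2: "1 - b1 = b2"
    using assms by simp
  have "f 1 < b1 * f (a1 / b1) + (1 - b1) * f (a2 / b2)"
  proof (rule sc[unfolded strictly_convex_at_1_def, rule_format], intro conjI)
    show "0 \<le> a1 / b1" "a1 / b1 < 1" "0 < b1" "b1 < 1"
      using assms b by auto
    show "1 < a2 / b2"
      using assms b by (simp add: field_simps)
    show "b1 * (a1 / b1) + (1 - b1) * (a2 / b2) = 1"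
      using assms b b1b2 by simp
  qed
  then show ?thesis
    using assms b b1b2 by (simp add: fterm_nonzero_right)
next
  case True
  then have b1: "b1 = 1" and a2: "0 < a2" "a2 = 1 - a1"
    using assms by auto
  define t where "t = 1 / (2 - a1)"
  have t: "t * (2 - a1) = 1" "0 < t" "t < 1"
    using assms b1 by (auto simp: t_def field_simps)
  \<comment> \<open>Strict convexity at 1 between \<open>a1\<close> and 2 forces the recession slope to be large.\<close>
  have "f 1 < t * f a1 + (1 - t) * f 2"
  proof (rule sc[unfolded strictly_convex_at_1_def, rule_format], intro conjI)
    have "t * a1 + (1 - t) * 2 = 2 - t * (2 - a1)"
      by (simp add: algebra_simps)
    then show "t * a1 + (1 - t) * 2 = 1"
      using t by simp
  qed (use assms b1 t in auto)
  then have "0 < (t * f a1 + (1 - t) * f 2) * (2 - a1)"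
    using f1 assms b1 by simp
  also have "\<dots> = t * (2 - a1) * f a1 + ((2 - a1) - t * (2 - a1)) * f 2"
    by (simp add: algebra_simps)
  also have "\<dots> = f a1 + a2 * f 2"
    using t a2 by simp
  finally have pos: "0 < f a1 + a2 * f 2" .
  show ?thesis
  proof (cases "fprime_inf f")
    case (real l)
    have "f 2 \<le> l"
      using convex_on_le_fprime_inf[OF f real, of 1 1] f1 by simp
    then have "0 < f a1 + a2 * l"
      using pos a2 by (smt (verit) mult_left_mono)
    then show ?thesis
      using True b1 real by (simp add: fterm_nonzero_right fterm_zero_right)
  next
    case PInf
    then show ?thesis
      using True b1 a2 by (simp add: fterm_nonzero_right fterm_zero_right)
  qed (use fprime_inf_neq_minf[OF f] in simp)
qed

lemma fterm_sum_eq_0_imp_eq: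
  fixes f :: "real \<Rightarrow> real"
  assumes f: "convex_on {0..} f" and f1: "f 1 = 0" and sc: "strictly_convex_at_1 f"
    and fin: "finite A"
    and a: "\<And>y. y \<in> A \<Longrightarrow> 0 \<le> a y" and b: "\<And>y. y \<in> A \<Longrightarrow> 0 \<le> b y"
    and sa: "(\<Sum>y\<in>A. a y) = 1" and sb: "(\<Sum>y\<in>A. b y) = 1"
    and zero: "(\<Sum>y\<in>A. fterm f (a y) (b y)) = 0"
  shows "\<forall>y\<in>A. a y = b y"
proof (rule ccontr)
  assume "\<not> (\<forall>y\<in>A. a y = b y)"
  \<comment> \<open>Reduce to two points by lumping together those where \<open>a < b\<close> and those where \<open>a \<ge> b\<close>.\<close>
  define P where "P = {y\<in>A. a y < b y}"
  define Q where "Q = A - P"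
  have "P \<noteq> {}"
  proof
    assume "P = {}"
    then have "\<forall>y\<in>A. b y \<le> a y"
      by (auto simp: P_def)
    with \<open>\<not> (\<forall>y\<in>A. a y = b y)\<close> have "(\<Sum>y\<in>A. b y) < (\<Sum>y\<in>A. a y)"
      using fin by (intro sum_strict_mono_ex1) (auto simp: order.order_iff_strict)
    with sa sb show False
      by simp
  qed
  have PA: "P \<subseteq> A" and finP: "finite P" and finQ: "finite Q"
    using fin by (auto simp: P_def Q_def)
  have split: "sum h A = sum h P + sum h Q" for h :: "_ \<Rightarrow> 'b::comm_monoid_add"
    unfolding Q_def using sum.subset_diff[OF PA fin] by (simp add: add.commute)
  have "0 < fterm f (sum a P) (sum b P) + fterm f (sum a Q) (sum b Q)"
  proof (rule fterm_two_point_pos[OF f f1 sc])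
    show "sum a P < sum b P"
      using finP \<open>P \<noteq> {}\<close> by (intro sum_strict_mono) (auto simp: P_def)
    show "0 \<le> sum a P" "0 \<le> sum b Q"
      using a b PA by (auto intro: sum_nonneg simp: Q_def)
    show "sum a P + sum a Q = 1" "sum b P + sum b Q = 1"
      using split[of a] split[of b] sa sb by simp_all
  qed
  also have "\<dots> \<le> (\<Sum>y\<in>P. fterm f (a y) (b y)) + (\<Sum>y\<in>Q. fterm f (a y) (b y))"
    using a b PA by (intro add_mono fterm_sum_le[OF f]) (auto simp: Q_def finP finQ fin)
  also have "\<dots> = 0"
    using zero split[of "\<lambda>y. fterm f (a y) (b y)"] by simp
  finally show False
    by simp
qed

section \<open>General properties of \<open>D\<^sub>f\<close>\<close>

lemma fdiv_eq_double_sum: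
  assumes "\<forall>x\<in>\<Omega>. 0 \<le> \<pi> x"
  shows "fdiv f \<Omega> \<pi> M L = (\<Sum>x\<in>\<Omega>. \<Sum>y\<in>\<Omega>. ereal (\<pi> x) * fterm f (M x y) (L x y))"
  unfolding fdiv_def using assms by (simp add: sum_distrib_left_ereal)

lemma fdiv_cong:
  assumes "\<And>x y. x \<in> \<Omega> \<Longrightarrow> y \<in> \<Omega> \<Longrightarrow> \<pi> x \<noteq> 0 \<Longrightarrow> M x y = M' x y \<and> L x y = L' x y"
  shows "fdiv f \<Omega> \<pi> M L = fdiv f \<Omega> \<pi> M' L'"
  unfolding fdiv_def
proof (rule sum.cong[OF refl], rule ereal_right_mult_cong[OF refl])
  fix x assume "x \<in> \<Omega>" "ereal (\<pi> x) \<noteq> 0"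
  then show "(\<Sum>y\<in>\<Omega>. fterm f (M x y) (L x y)) = (\<Sum>y\<in>\<Omega>. fterm f (M' x y) (L' x y))"
    using assms by (intro sum.cong) (auto simp: zero_ereal_def)
qed

lemma fdiv_nonneg:
  fixes f :: "real \<Rightarrow> real"
  assumes f: "convex_on {0..} f" and f1: "f 1 = 0" and fin: "finite \<Omega>"
    and \<pi>: "\<forall>x\<in>\<Omega>. 0 \<le> \<pi> x" and M: "trans_mat \<Omega> M" and L: "trans_mat \<Omega> L"
  shows "0 \<le> fdiv f \<Omega> \<pi> M L"
  unfolding fdiv_def
proof (rule sum_nonneg)
  fix x assume x: "x \<in> \<Omega>"
  then have "0 \<le> (\<Sum>y\<in>\<Omega>. fterm f (M x y) (L x y))"
    using M L by (intro fterm_sum_nonneg[OF f f1 fin]) (auto simp: trans_mat_def)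
  then show "0 \<le> ereal (\<pi> x) * (\<Sum>y\<in>\<Omega>. fterm f (M x y) (L x y))"
    using \<pi> x by simp
qed

lemma fdiv_eq_0_iff:
  fixes f :: "real \<Rightarrow> real"
  assumes f: "convex_on {0..} f" and f1: "f 1 = 0" and sc: "strictly_convex_at_1 f"
    and fin: "finite \<Omega>" and \<pi>: "\<forall>x\<in>\<Omega>. 0 < \<pi> x"
    and M: "trans_mat \<Omega> M" and L: "trans_mat \<Omega> L"
  shows "fdiv f \<Omega> \<pi> M L = 0 \<longleftrightarrow> (\<forall>x\<in>\<Omega>. \<forall>y\<in>\<Omega>. M x y = L x y)"
proof
  assume zero: "fdiv f \<Omega> \<pi> M L = 0"
  have rows_nonneg: "0 \<le> (\<Sum>y\<in>\<Omega>. fterm f (M x y) (L x y))" if "x \<in> \<Omega>" for x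
    using M L that by (intro fterm_sum_nonneg[OF f f1 fin]) (auto simp: trans_mat_def)
  have "\<forall>x\<in>\<Omega>. ereal (\<pi> x) * (\<Sum>y\<in>\<Omega>. fterm f (M x y) (L x y)) = 0"
    using zero rows_nonneg \<pi> unfolding fdiv_def
    by (subst (asm) sum_nonneg_eq_0_iff[OF fin]) (auto simp: less_imp_le)
  then have "(\<Sum>y\<in>\<Omega>. fterm f (M x y) (L x y)) = 0" if "x \<in> \<Omega>" for x
    using \<pi> that by force
  then show "\<forall>x\<in>\<Omega>. \<forall>y\<in>\<Omega>. M x y = L x y"
    using M L by (intro ballI fterm_sum_eq_0_imp_eq[OF f f1 sc fin]) (auto simp: trans_mat_def)
next
  assume "\<forall>x\<in>\<Omega>. \<forall>y\<in>\<Omega>. M x y = L x y"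
  then show "fdiv f \<Omega> \<pi> M L = 0"
    by (simp add: fdiv_def fterm_diag[of f, OF f1])
qed

lemma fdiv_convex:
  fixes f :: "real \<Rightarrow> real"
  assumes f: "convex_on {0..} f" and \<pi>: "\<forall>x\<in>\<Omega>. 0 \<le> \<pi> x"
    and M1: "trans_mat \<Omega> M1" and M2: "trans_mat \<Omega> M2"
    and L: "\<forall>x\<in>\<Omega>. \<forall>y\<in>\<Omega>. 0 \<le> L x y" and t: "0 \<le> t" "t \<le> 1"
  shows "fdiv f \<Omega> \<pi> (\<lambda>x y. t * M1 x y + (1 - t) * M2 x y) L
        \<le> ereal t * fdiv f \<Omega> \<pi> M1 L + ereal (1 - t) * fdiv f \<Omega> \<pi> M2 L"
proof -
  define G1 where "G1 x = (\<Sum>y\<in>\<Omega>. fterm f (M1 x y) (L x y))" for x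
  define G2 where "G2 x = (\<Sum>y\<in>\<Omega>. fterm f (M2 x y) (L x y))" for x
  have row: "(\<Sum>y\<in>\<Omega>. fterm f (t * M1 x y + (1 - t) * M2 x y) (L x y))
      \<le> ereal t * G1 x + ereal (1 - t) * G2 x" if x: "x \<in> \<Omega>" for x
  proof -
    have "(\<Sum>y\<in>\<Omega>. fterm f (t * M1 x y + (1 - t) * M2 x y) (L x y))
        \<le> (\<Sum>y\<in>\<Omega>. ereal t * fterm f (M1 x y) (L x y) + ereal (1 - t) * fterm f (M2 x y) (L x y))"
      using x M1 M2 L t by (intro sum_mono fterm_convex_left[OF f]) (auto simp: trans_mat_def)
    then show ?thesis
      using t by (simp add: G1_def G2_def sum.distrib sum_distrib_left_ereal)
  qed
  have "fdiv f \<Omega> \<pi> (\<lambda>x y. t * M1 x y + (1 - t) * M2 x y) L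
      \<le> (\<Sum>x\<in>\<Omega>. ereal (\<pi> x) * (ereal t * G1 x + ereal (1 - t) * G2 x))"
    unfolding fdiv_def using \<pi> by (intro sum_mono ereal_mult_left_mono row) auto
  also have "\<dots> = ereal t * fdiv f \<Omega> \<pi> M1 L + ereal (1 - t) * fdiv f \<Omega> \<pi> M2 L"
    using t by (simp add: fdiv_def G1_def[symmetric] G2_def[symmetric] ereal_pos_distrib \<pi>
        sum.distrib sum_distrib_left_ereal mult.left_commute)
  finally show ?thesis .
qed

lemma stationary_zero:
  assumes "finite \<Omega>" "\<forall>x\<in>\<Omega>. 0 \<le> \<pi> x" "\<forall>x\<in>\<Omega>. \<forall>y\<in>\<Omega>. 0 \<le> P x y"
    and "stationary \<Omega> \<pi> P" "x \<in> \<Omega>" "\<pi> x = 0" "y \<in> \<Omega>" "0 < \<pi> y"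
  shows "P y x = 0"
proof -
  have "(\<Sum>z\<in>\<Omega>. \<pi> z * P z x) = 0"
    using assms(4-6) by (simp add: stationary_def)
  then have "\<pi> y * P y x = 0"
    using assms by (subst (asm) sum_nonneg_eq_0_iff) auto
  then show ?thesis
    using assms(8) by simp
qed

lemma reversible_imp_stationary:
  assumes "trans_mat \<Omega> P" "reversible \<Omega> \<pi> P"
  shows "stationary \<Omega> \<pi> P"
  unfolding stationary_def
proof
  fix y assume y: "y \<in> \<Omega>"
  have "(\<Sum>x\<in>\<Omega>. \<pi> x * P x y) = (\<Sum>x\<in>\<Omega>. \<pi> y * P y x)"
    using assms(2) y by (intro sum.cong) (auto simp: reversible_def)
  also have "\<dots> = \<pi> y"
    using assms(1) y by (simp add: trans_mat_def flip: sum_distrib_left)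
  finally show "(\<Sum>x\<in>\<Omega>. \<pi> x * P x y) = \<pi> y" .
qed

lemma time_rev_reversible:
  "reversible \<Omega> \<pi> P \<Longrightarrow> x \<in> \<Omega> \<Longrightarrow> y \<in> \<Omega> \<Longrightarrow> \<pi> x \<noteq> 0 \<Longrightarrow> time_rev \<pi> P x y = P x y"
  unfolding reversible_def time_rev_def by (metis nonzero_mult_div_cancel_left)

text \<open>By homogeneity of the perspective, entry \<open>(x, y)\<close> of the time reversals weighted by \<open>\<pi> x\<close>
  is entry \<open>(y, x)\<close> of the originals weighted by \<open>\<pi> y\<close>; stationarity guarantees that states with
  \<open>\<pi> x = 0\<close> receive no mass from states with \<open>\<pi> y > 0\<close>.\<close>
lemma fdiv_time_rev:
  assumes fin: "finite \<Omega>" and \<pi>: "\<forall>x\<in>\<Omega>. 0 \<le> \<pi> x"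
    and M: "\<forall>x\<in>\<Omega>. \<forall>y\<in>\<Omega>. 0 \<le> M x y" and L: "\<forall>x\<in>\<Omega>. \<forall>y\<in>\<Omega>. 0 \<le> L x y"
    and stM: "stationary \<Omega> \<pi> M" and stL: "stationary \<Omega> \<pi> L"
  shows "fdiv f \<Omega> \<pi> M L = fdiv f \<Omega> \<pi> (time_rev \<pi> M) (time_rev \<pi> L)"
proof -
  have swap: "ereal (\<pi> x) * fterm f (time_rev \<pi> M x y) (time_rev \<pi> L x y)
      = ereal (\<pi> y) * fterm f (M y x) (L y x)" if x: "x \<in> \<Omega>" and y: "y \<in> \<Omega>" for x y
  proof (cases "\<pi> x = 0 \<or> \<pi> y = 0")
    case True
    moreover have "M y x = 0" "L y x = 0" if "\<pi> x = 0" "\<pi> y \<noteq> 0"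
      using that stationary_zero[OF fin \<pi>] M L stM stL x y \<pi> by (auto simp: less_le)
    ultimately show ?thesis
      by (cases "\<pi> y = 0") (auto simp: time_rev_def zero_ereal_def[symmetric])
  next
    case False
    then have "0 < \<pi> y / \<pi> x"
      using \<pi> x y by (auto simp: less_le)
    then have "fterm f (time_rev \<pi> M x y) (time_rev \<pi> L x y)
        = ereal (\<pi> y / \<pi> x) * fterm f (M y x) (L y x)"
      unfolding time_rev_def by (simp add: fterm_scale flip: times_divide_eq_left)
    then show ?thesis
      using False by (simp add: mult.assoc[symmetric])
  qed
  have "fdiv f \<Omega> \<pi> (time_rev \<pi> M) (time_rev \<pi> L) = (\<Sum>x\<in>\<Omega>. \<Sum>y\<in>\<Omega>. ereal (\<pi> y) * fterm f (M y x) (L y x))"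
    using \<pi> swap by (simp add: fdiv_eq_double_sum)
  also have "\<dots> = fdiv f \<Omega> \<pi> M L"
    using \<pi> by (subst sum.swap) (simp add: fdiv_eq_double_sum)
  finally show ?thesis ..
qed

section \<open>Product spaces and tensor products\<close>

lemma finite_prod_space: "\<forall>i\<in>{1..d}. finite (S i) \<Longrightarrow> finite (prod_space d S)"
  unfolding prod_space_def by (auto intro!: finite_PiE)

lemma prod_space_memD: "x \<in> prod_space d S \<Longrightarrow> i \<in> {1..d} \<Longrightarrow> x i \<in> S i"
  unfolding prod_space_def by auto

lemma prod_space_witness:
  assumes "\<forall>i\<in>{1..d}. \<exists>a\<in>S i. Q i a"
  shows "\<exists>x\<in>prod_space d S. \<forall>i\<in>{1..d}. Q i (x i)"
proof -
  obtain c where "\<forall>i\<in>{1..d}. c i \<in> S i \<and> Q i (c i)"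
    using assms by metis
  then show ?thesis
    unfolding prod_space_def by (intro bexI[of _ "restrict c {1..d}"]) auto
qed

lemma sum_prod_space:
  fixes g :: "nat \<Rightarrow> 'a \<Rightarrow> 'b::comm_semiring_1"
  assumes "\<forall>i\<in>{1..d}. finite (S i)"
  shows "(\<Sum>x\<in>prod_space d S. \<Prod>i\<in>{1..d}. g i (x i)) = (\<Prod>i\<in>{1..d}. \<Sum>a\<in>S i. g i a)"
  unfolding prod_space_def using assms by (subst prod_sum_PiE) auto

lemma sum_sum_prod_space:
  fixes h :: "nat \<Rightarrow> 'a \<Rightarrow> 'a \<Rightarrow> 'b::comm_semiring_1"
  assumes "\<forall>i\<in>{1..d}. finite (S i)"
  shows "(\<Sum>x\<in>prod_space d S. \<Sum>y\<in>prod_space d S. \<Prod>i\<in>{1..d}. h i (x i) (y i))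
       = (\<Prod>i\<in>{1..d}. \<Sum>a\<in>S i. \<Sum>b\<in>S i. h i a b)"
proof -
  have "(\<Sum>x\<in>prod_space d S. \<Sum>y\<in>prod_space d S. \<Prod>i\<in>{1..d}. h i (x i) (y i))
      = (\<Sum>x\<in>prod_space d S. \<Prod>i\<in>{1..d}. \<Sum>b\<in>S i. h i (x i) b)"
    by (rule sum.cong[OF refl], rule sum_prod_space[OF assms])
  also have "\<dots> = (\<Prod>i\<in>{1..d}. \<Sum>a\<in>S i. \<Sum>b\<in>S i. h i a b)"
    by (rule sum_prod_space[OF assms])
  finally show ?thesis .
qed

lemma prod_pos_iff_nonneg:
  fixes g :: "'i \<Rightarrow> real"
  assumes "finite I" "\<forall>i\<in>I. 0 \<le> g i"
  shows "0 < prod g I \<longleftrightarrow> (\<forall>i\<in>I. 0 < g i)"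
  using assms by (auto simp: less_le prod_nonneg prod_zero_iff)

lemma trans_mat_tensor_mat:
  assumes fin: "\<forall>i\<in>{1..d}. finite (S i)" and L: "\<forall>i\<in>{1..d}. trans_mat (S i) (Ls i)"
  shows "trans_mat (prod_space d S) (tensor_mat d Ls)"
  unfolding trans_mat_def
proof safe
  fix x y assume x: "x \<in> prod_space d S" and y: "y \<in> prod_space d S"
  show "0 \<le> tensor_mat d Ls x y"
    unfolding tensor_mat_def using L prod_space_memD[OF x] prod_space_memD[OF y]
    by (auto intro!: prod_nonneg simp: trans_mat_def)
next
  fix x assume x: "x \<in> prod_space d S"
  show "(\<Sum>y\<in>prod_space d S. tensor_mat d Ls x y) = 1"
    unfolding tensor_mat_def using L prod_space_memD[OF x]
    by (subst sum_prod_space[OF fin]) (simp add: trans_mat_def)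
qed

lemma prob_mass_tensor_mass:
  assumes fin: "\<forall>i\<in>{1..d}. finite (S i)" and p: "\<forall>i\<in>{1..d}. prob_mass (S i) (ps i)"
  shows "prob_mass (prod_space d S) (tensor_mass d ps)"
  unfolding prob_mass_def
proof safe
  fix x assume x: "x \<in> prod_space d S"
  show "0 \<le> tensor_mass d ps x"
    unfolding tensor_mass_def using p prod_space_memD[OF x]
    by (auto intro!: prod_nonneg simp: prob_mass_def)
next
  show "(\<Sum>x\<in>prod_space d S. tensor_mass d ps x) = 1"
    unfolding tensor_mass_def using p by (subst sum_prod_space[OF fin]) (simp add: prob_mass_def)
qed

lemma stationary_tensor:
  assumes fin: "\<forall>i\<in>{1..d}. finite (S i)" and st: "\<forall>i\<in>{1..d}. stationary (S i) (ps i) (Ls i)"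
  shows "stationary (prod_space d S) (tensor_mass d ps) (tensor_mat d Ls)"
  unfolding stationary_def
proof
  fix y assume y: "y \<in> prod_space d S"
  have "(\<Sum>x\<in>prod_space d S. tensor_mass d ps x * tensor_mat d Ls x y)
      = (\<Prod>i\<in>{1..d}. \<Sum>a\<in>S i. ps i a * Ls i a (y i))"
    unfolding tensor_mass_def tensor_mat_def prod.distrib[symmetric] by (rule sum_prod_space[OF fin])
  also have "\<dots> = tensor_mass d ps y"
    unfolding tensor_mass_def using st prod_space_memD[OF y] by (simp add: stationary_def)
  finally show "(\<Sum>x\<in>prod_space d S. tensor_mass d ps x * tensor_mat d Ls x y) = tensor_mass d ps y" .
qed

lemma reversible_tensor:
  assumes "\<forall>i\<in>{1..d}. reversible (S i) (ps i) (Ls i)"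
  shows "reversible (prod_space d S) (tensor_mass d ps) (tensor_mat d Ls)"
  unfolding reversible_def tensor_mass_def tensor_mat_def
proof (intro ballI)
  fix x y assume x: "x \<in> prod_space d S" and y: "y \<in> prod_space d S"
  show "(\<Prod>i\<in>{1..d}. ps i (x i)) * (\<Prod>i\<in>{1..d}. Ls i (x i) (y i))
      = (\<Prod>i\<in>{1..d}. ps i (y i)) * (\<Prod>i\<in>{1..d}. Ls i (y i) (x i))"
    unfolding prod.distrib[symmetric] using assms prod_space_memD[OF x] prod_space_memD[OF y]
    by (intro prod.cong refl) (simp add: reversible_def)
qed

lemma tensor_mat_time_rev:
  "tensor_mat d (\<lambda>i. time_rev (ps i) (Ls i)) = time_rev (tensor_mass d ps) (tensor_mat d Ls)"
  unfolding tensor_mat_def tensor_mass_def time_rev_def by (simp add: prod_dividef prod.distrib)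

section \<open>Squared Hellinger distance\<close>

lemma fprime_inf_hellinger: "fprime_inf hellinger_fun = 1"
proof -
  have "((\<lambda>x. ereal ((1 - sqrt x)\<^sup>2)) \<longlongrightarrow> ereal ((1 - sqrt 0)\<^sup>2)) (at_right 0)"
    by (intro tendsto_ereal tendsto_eq_intros) (auto intro: tendsto_real_sqrt)
  then have "((\<lambda>x. ereal ((1 - sqrt x)\<^sup>2)) \<longlongrightarrow> 1) (at_right 0)"
    by (simp add: one_ereal_def)
  then have "((\<lambda>x. ereal (x * hellinger_fun (1 / x))) \<longlongrightarrow> 1) (at_right 0)"
  proof (rule Lim_transform_eventually)
    show "\<forall>\<^sub>F x in at_right 0. ereal ((1 - sqrt x)\<^sup>2) = ereal (x * hellinger_fun (1 / x))"
      using eventually_at_right_real[OF zero_less_one]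
    proof (rule eventually_mono)
      fix x :: real assume "x \<in> {0<..<1}"
      then have "x * hellinger_fun (1 / x) = (sqrt x * (1 / sqrt x - 1))\<^sup>2"
        by (simp add: hellinger_fun_def real_sqrt_divide power_mult_distrib)
      also have "sqrt x * (1 / sqrt x - 1) = 1 - sqrt x"
        using \<open>x \<in> {0<..<1}\<close> by (simp add: right_diff_distrib)
      finally show "ereal ((1 - sqrt x)\<^sup>2) = ereal (x * hellinger_fun (1 / x))"
        by simp
    qed
  qed
  then show ?thesis
    unfolding fprime_inf_def by (rule tendsto_Lim[rotated]) simp
qed

lemma fterm_hellinger:
  assumes "0 \<le> a" "0 \<le> b"
  shows "fterm hellinger_fun a b = ereal ((sqrt a - sqrt b)\<^sup>2)"
proof (cases "b = 0")
  case True
  then show ?thesis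
    using assms by (simp add: fterm_zero_right fprime_inf_hellinger)
next
  case False
  then have "b * hellinger_fun (a / b) = (sqrt b * (sqrt a / sqrt b - 1))\<^sup>2"
    using assms by (simp add: hellinger_fun_def real_sqrt_divide power_mult_distrib)
  also have "sqrt b * (sqrt a / sqrt b - 1) = sqrt a - sqrt b"
    using False assms by (simp add: right_diff_distrib)
  finally show ?thesis
    using False by (simp add: fterm_nonzero_right)
qed

definition bhattacharyya :: "'x set \<Rightarrow> ('x \<Rightarrow> real) \<Rightarrow> ('x \<Rightarrow> 'x \<Rightarrow> real) \<Rightarrow> ('x \<Rightarrow> 'x \<Rightarrow> real) \<Rightarrow> real" where
  "bhattacharyya \<Omega> \<pi> M L = (\<Sum>x\<in>\<Omega>. \<Sum>y\<in>\<Omega>. \<pi> x * (sqrt (M x y) * sqrt (L x y)))"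

lemma fdiv_hellinger:
  assumes \<pi>: "prob_mass \<Omega> \<pi>" and M: "trans_mat \<Omega> M" and L: "trans_mat \<Omega> L"
  shows "fdiv hellinger_fun \<Omega> \<pi> M L = ereal (2 - 2 * bhattacharyya \<Omega> \<pi> M L)"
proof -
  have row: "(\<Sum>y\<in>\<Omega>. (sqrt (M x y) - sqrt (L x y))\<^sup>2) = 2 - 2 * (\<Sum>y\<in>\<Omega>. sqrt (M x y) * sqrt (L x y))"
    if x: "x \<in> \<Omega>" for x
  proof -
    have "(\<Sum>y\<in>\<Omega>. (sqrt (M x y) - sqrt (L x y))\<^sup>2)
        = (\<Sum>y\<in>\<Omega>. M x y + L x y - 2 * (sqrt (M x y) * sqrt (L x y)))"
      using M L x by (intro sum.cong) (auto simp: trans_mat_def power2_diff)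
    then show ?thesis
      using M L x by (simp add: sum_subtractf sum.distrib sum_distrib_left trans_mat_def)
  qed
  have "fdiv hellinger_fun \<Omega> \<pi> M L = ereal (\<Sum>x\<in>\<Omega>. \<pi> x * (2 - 2 * (\<Sum>y\<in>\<Omega>. sqrt (M x y) * sqrt (L x y))))"
    using M L row by (simp add: fdiv_def fterm_hellinger trans_mat_def)
  also have "\<dots> = ereal (2 * (\<Sum>x\<in>\<Omega>. \<pi> x) - 2 * bhattacharyya \<Omega> \<pi> M L)"
    by (simp add: bhattacharyya_def right_diff_distrib sum_subtractf sum_distrib_left
        sum_distrib_right mult_ac)
  finally show ?thesis
    using \<pi> by (simp add: prob_mass_def)
qed

lemma bhattacharyya_nonneg:
  "prob_mass \<Omega> \<pi> \<Longrightarrow> trans_mat \<Omega> M \<Longrightarrow> trans_mat \<Omega> L \<Longrightarrow> 0 \<le> bhattacharyya \<Omega> \<pi> M L"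
  unfolding bhattacharyya_def prob_mass_def trans_mat_def by (auto intro!: sum_nonneg)

lemma bhattacharyya_le_1:
  assumes \<pi>: "prob_mass \<Omega> \<pi>" and M: "trans_mat \<Omega> M" and L: "trans_mat \<Omega> L"
  shows "bhattacharyya \<Omega> \<pi> M L \<le> 1"
proof -
  have "bhattacharyya \<Omega> \<pi> M L \<le> (\<Sum>x\<in>\<Omega>. \<Sum>y\<in>\<Omega>. \<pi> x * ((M x y + L x y) / 2))"
    unfolding bhattacharyya_def using \<pi> M L arith_geo_mean_sqrt
    by (intro sum_mono mult_left_mono) (auto simp: prob_mass_def trans_mat_def real_sqrt_mult)
  also have "\<dots> = (\<Sum>x\<in>\<Omega>. \<pi> x)"
    using M L by (intro sum.cong) (auto simp: trans_mat_def sum_divide_distrib[symmetric]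
        sum_distrib_left[symmetric] sum.distrib)
  also have "\<dots> = 1"
    using \<pi> by (simp add: prob_mass_def)
  finally show ?thesis .
qed

lemma bhattacharyya_tensor:
  assumes "\<forall>i\<in>{1..d}. finite (S i)"
  shows "bhattacharyya (prod_space d S) (tensor_mass d ps) (tensor_mat d Ms) (tensor_mat d Ls)
       = (\<Prod>i\<in>{1..d}. bhattacharyya (S i) (ps i) (Ms i) (Ls i))"
proof -
  have sqrt_prod: "sqrt (prod g A) = (\<Prod>i\<in>A. sqrt (g i))" for g :: "nat \<Rightarrow> real" and A
    by (induction A rule: infinite_finite_induct) (auto simp: real_sqrt_mult)
  show ?thesis
    unfolding bhattacharyya_def tensor_mass_def tensor_mat_def sqrt_prod prod.distrib[symmetric]
    by (rule sum_sum_prod_space[OF assms])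
qed

lemma prod_le_member:
  fixes B :: "'i \<Rightarrow> real"
  assumes "finite I" "i \<in> I" "\<forall>j\<in>I. 0 \<le> B j \<and> B j \<le> 1"
  shows "prod B I \<le> B i"
proof -
  have "prod B I = B i * prod B (I - {i})"
    using assms by (simp add: prod.remove)
  also have "\<dots> \<le> B i"
    using assms by (intro mult_left_le prod_le_1) auto
  finally show ?thesis .
qed

lemma one_minus_prod_le_sum:
  fixes B :: "'i \<Rightarrow> real"
  assumes "finite I" "\<forall>j\<in>I. 0 \<le> B j \<and> B j \<le> 1"
  shows "1 - prod B I \<le> (\<Sum>j\<in>I. 1 - B j)"
  using assms
proof (induction I rule: finite_induct)
  case (insert i I)
  then have "0 \<le> (1 - B i) * (1 - prod B I)"
    by (simp add: prod_le_1)
  then show ?case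
    using insert by (simp add: algebra_simps)
qed simp

lemma fdiv_hellinger_tensor_bounds:
  assumes d: "1 \<le> d" and fin: "\<forall>i\<in>{1..d}. finite (S i)"
    and Ms: "\<forall>i\<in>{1..d}. trans_mat (S i) (Ms i)" and Ls: "\<forall>i\<in>{1..d}. trans_mat (S i) (Ls i)"
    and ps: "\<forall>i\<in>{1..d}. prob_mass (S i) (ps i)"
  shows "Max ((\<lambda>i. fdiv hellinger_fun (S i) (ps i) (Ms i) (Ls i)) ` {1..d})
           \<le> fdiv hellinger_fun (prod_space d S) (tensor_mass d ps) (tensor_mat d Ms) (tensor_mat d Ls)
      \<and> fdiv hellinger_fun (prod_space d S) (tensor_mass d ps) (tensor_mat d Ms) (tensor_mat d Ls)
           \<le> (\<Sum>i\<in>{1..d}. fdiv hellinger_fun (S i) (ps i) (Ms i) (Ls i))"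
proof -
  define B where "B i = bhattacharyya (S i) (ps i) (Ms i) (Ls i)" for i
  have B: "\<forall>i\<in>{1..d}. 0 \<le> B i \<and> B i \<le> 1"
    using Ms Ls ps by (auto simp: B_def bhattacharyya_nonneg bhattacharyya_le_1)
  have factor: "fdiv hellinger_fun (S i) (ps i) (Ms i) (Ls i) = ereal (2 - 2 * B i)" if "i \<in> {1..d}" for i
    using that Ms Ls ps by (simp add: fdiv_hellinger B_def)
  have tensor: "fdiv hellinger_fun (prod_space d S) (tensor_mass d ps) (tensor_mat d Ms) (tensor_mat d Ls)
      = ereal (2 - 2 * prod B {1..d})"
    using fin Ms Ls ps
    by (simp add: fdiv_hellinger prob_mass_tensor_mass trans_mat_tensor_mat bhattacharyya_tensor B_def)
  have "fdiv hellinger_fun (S i) (ps i) (Ms i) (Ls i) \<le> ereal (2 - 2 * prod B {1..d})"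
    if "i \<in> {1..d}" for i
    using that factor prod_le_member[OF _ that B] by simp
  then have "Max ((\<lambda>i. fdiv hellinger_fun (S i) (ps i) (Ms i) (Ls i)) ` {1..d})
      \<le> ereal (2 - 2 * prod B {1..d})"
    using d by (subst Max_le_iff) auto
  moreover have "2 - 2 * prod B {1..d} \<le> (\<Sum>i\<in>{1..d}. 2 - 2 * B i)"
    using one_minus_prod_le_sum[OF _ B] by (simp add: sum_subtractf flip: sum_distrib_left)
  ultimately show ?thesis
    by (simp add: tensor factor)
qed

section \<open>Kullback-Leibler divergence\<close>

lemma fprime_inf_KL: "fprime_inf KL_fun = \<infinity>"
proof -
  have "((\<lambda>x. ereal (x * KL_fun (1 / x))) \<longlongrightarrow> \<infinity>) (at_right 0)"
    unfolding tendsto_PInfty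
  proof
    fix r :: real
    have "\<forall>\<^sub>F x in at_right 0. x \<in> {0<..<exp (- r)}"
      by (intro eventually_at_right_real) simp
    then show "\<forall>\<^sub>F x in at_right 0. ereal r < ereal (x * KL_fun (1 / x))"
    proof (rule eventually_mono)
      fix x assume x: "x \<in> {0<..<exp (- r)}"
      then have "ln x < - r"
        using ln_less_cancel_iff[of x "exp (- r)"] by auto
      moreover have "x * KL_fun (1 / x) = - ln x"
        using x by (simp add: KL_fun_def ln_div)
      ultimately show "ereal r < ereal (x * KL_fun (1 / x))"
        by simp
    qed
  qed
  then show ?thesis
    unfolding fprime_inf_def by (rule tendsto_Lim[rotated]) simp
qed

definition abs_cont :: "'x set \<Rightarrow> ('x \<Rightarrow> real) \<Rightarrow> ('x \<Rightarrow> 'x \<Rightarrow> real) \<Rightarrow> ('x \<Rightarrow> 'x \<Rightarrow> real) \<Rightarrow> bool" where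
  "abs_cont \<Omega> \<pi> M L \<longleftrightarrow> (\<forall>x\<in>\<Omega>. \<forall>y\<in>\<Omega>. 0 < \<pi> x \<longrightarrow> 0 < M x y \<longrightarrow> 0 < L x y)"

lemma fdiv_KL_abs_cont:
  assumes \<pi>: "\<forall>x\<in>\<Omega>. 0 \<le> \<pi> x" and M: "\<forall>x\<in>\<Omega>. \<forall>y\<in>\<Omega>. 0 \<le> M x y"
    and ac: "abs_cont \<Omega> \<pi> M L"
  shows "fdiv KL_fun \<Omega> \<pi> M L = ereal (\<Sum>x\<in>\<Omega>. \<Sum>y\<in>\<Omega>. \<pi> x * M x y * ln (M x y / L x y))"
proof -
  have "ereal (\<pi> x) * fterm KL_fun (M x y) (L x y) = ereal (\<pi> x * M x y * ln (M x y / L x y))"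
    if "x \<in> \<Omega>" "y \<in> \<Omega>" for x y
  proof (cases "\<pi> x = 0 \<or> M x y = 0")
    case True
    then show ?thesis
      by (auto simp: fterm_def KL_fun_def zero_ereal_def[symmetric])
  next
    case False
    then have "0 < L x y"
      using that \<pi> M ac by (auto simp: abs_cont_def less_le)
    then show ?thesis
      by (simp add: fterm_nonzero_right KL_fun_def)
  qed
  then show ?thesis
    using \<pi> by (simp add: fdiv_eq_double_sum)
qed

lemma fdiv_KL_not_abs_cont:
  assumes "finite \<Omega>" "\<forall>x\<in>\<Omega>. 0 \<le> \<pi> x" "\<forall>x\<in>\<Omega>. \<forall>y\<in>\<Omega>. 0 \<le> L x y"
    and "\<not> abs_cont \<Omega> \<pi> M L"
  shows "fdiv KL_fun \<Omega> \<pi> M L = \<infinity>"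
proof -
  obtain x y where xy: "x \<in> \<Omega>" "y \<in> \<Omega>" "0 < \<pi> x" "0 < M x y" "L x y = 0"
    using assms by (force simp: abs_cont_def less_le)
  then have "ereal (\<pi> x) * fterm KL_fun (M x y) (L x y) = \<infinity>"
    by (simp add: fterm_zero_right fprime_inf_KL)
  then have "(\<Sum>y\<in>\<Omega>. ereal (\<pi> x) * fterm KL_fun (M x y) (L x y)) = \<infinity>"
    using xy assms(1) by (auto simp: sum_Pinfty intro!: bexI[of _ y])
  then show ?thesis
    using xy assms(1,2) by (auto simp: fdiv_eq_double_sum sum_Pinfty)
qed

lemma sum_eq_1_imp_ex_pos:
  fixes p :: "'a \<Rightarrow> real"
  assumes "(\<Sum>a\<in>A. p a) = 1"
  shows "\<exists>a\<in>A. 0 < p a"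
proof (rule ccontr)
  assume "\<not> (\<exists>a\<in>A. 0 < p a)"
  then have "(\<Sum>a\<in>A. p a) \<le> 0"
    by (intro sum_nonpos) auto
  with assms show False
    by simp
qed

lemma tensor_mass_pos_iff:
  assumes "\<forall>i\<in>{1..d}. prob_mass (S i) (ps i)" "x \<in> prod_space d S"
  shows "0 < tensor_mass d ps x \<longleftrightarrow> (\<forall>i\<in>{1..d}. 0 < ps i (x i))"
  unfolding tensor_mass_def using assms(1) prod_space_memD[OF assms(2)]
  by (intro prod_pos_iff_nonneg) (auto simp: prob_mass_def)

lemma tensor_mat_pos_iff:
  assumes "\<forall>i\<in>{1..d}. trans_mat (S i) (Ps i)" "x \<in> prod_space d S" "y \<in> prod_space d S"
  shows "0 < tensor_mat d Ps x y \<longleftrightarrow> (\<forall>i\<in>{1..d}. 0 < Ps i (x i) (y i))"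
  unfolding tensor_mat_def using assms(1) prod_space_memD[OF assms(2)] prod_space_memD[OF assms(3)]
  by (intro prod_pos_iff_nonneg) (auto simp: trans_mat_def)

lemma tensor_support_witness:
  assumes Ms: "\<forall>j\<in>{1..d}. trans_mat (S j) (Ms j)" and ps: "\<forall>j\<in>{1..d}. prob_mass (S j) (ps j)"
    and i: "i \<in> {1..d}" and ab: "a \<in> S i" "b \<in> S i" "0 < ps i a" "0 < Ms i a b"
  obtains x y where "x \<in> prod_space d S" "y \<in> prod_space d S" "x i = a" "y i = b"
    "0 < tensor_mass d ps x" "0 < tensor_mat d Ms x y"
proof -
  have "\<exists>c\<in>S j. if j = i then c = a else 0 < ps j c" if "j \<in> {1..d}" for j
    using that ab ps sum_eq_1_imp_ex_pos[of "ps j" "S j"] by (auto simp: prob_mass_def)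
  then have "\<exists>x\<in>prod_space d S. \<forall>j\<in>{1..d}. if j = i then x j = a else 0 < ps j (x j)"
    by (intro prod_space_witness ballI)
  then obtain x where x: "x \<in> prod_space d S" "\<forall>j\<in>{1..d}. if j = i then x j = a else 0 < ps j (x j)" ..
  have "\<exists>c\<in>S j. if j = i then c = b else 0 < Ms j (x j) c" if "j \<in> {1..d}" for j
    using that ab Ms prod_space_memD[OF x(1) that] sum_eq_1_imp_ex_pos[of "Ms j (x j)" "S j"]
    by (auto simp: trans_mat_def)
  then have "\<exists>y\<in>prod_space d S. \<forall>j\<in>{1..d}. if j = i then y j = b else 0 < Ms j (x j) (y j)"
    by (intro prod_space_witness ballI)
  then obtain y where y: "y \<in> prod_space d S" "\<forall>j\<in>{1..d}. if j = i then y j = b else 0 < Ms j (x j) (y j)" ..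
  have "0 < ps j (x j) \<and> 0 < Ms j (x j) (y j)" if "j \<in> {1..d}" for j
    using that x(2) y(2) ab by (cases "j = i") auto
  then have "0 < tensor_mass d ps x" "0 < tensor_mat d Ms x y"
    using tensor_mass_pos_iff[OF ps x(1)] tensor_mat_pos_iff[OF Ms x(1) y(1)] by auto
  moreover have "x i = a" "y i = b"
    using x(2) y(2) i by auto
  ultimately show ?thesis
    using that x(1) y(1) by blast
qed

lemma abs_cont_tensor_iff:
  assumes Ms: "\<forall>i\<in>{1..d}. trans_mat (S i) (Ms i)" and Ls: "\<forall>i\<in>{1..d}. trans_mat (S i) (Ls i)"
    and ps: "\<forall>i\<in>{1..d}. prob_mass (S i) (ps i)"
  shows "abs_cont (prod_space d S) (tensor_mass d ps) (tensor_mat d Ms) (tensor_mat d Ls)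
     \<longleftrightarrow> (\<forall>i\<in>{1..d}. abs_cont (S i) (ps i) (Ms i) (Ls i))"
proof
  assume ac: "abs_cont (prod_space d S) (tensor_mass d ps) (tensor_mat d Ms) (tensor_mat d Ls)"
  show "\<forall>i\<in>{1..d}. abs_cont (S i) (ps i) (Ms i) (Ls i)"
    unfolding abs_cont_def
  proof (intro ballI impI)
    fix i a b assume i: "i \<in> {1..d}" and ab: "a \<in> S i" "b \<in> S i" "0 < ps i a" "0 < Ms i a b"
    then obtain x y where xy: "x \<in> prod_space d S" "y \<in> prod_space d S" "x i = a" "y i = b"
      and "0 < tensor_mass d ps x" "0 < tensor_mat d Ms x y"
      by (rule tensor_support_witness[OF Ms ps])
    then have "0 < tensor_mat d Ls x y"
      using ac by (auto simp: abs_cont_def)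
    then show "0 < Ls i a b"
      using tensor_mat_pos_iff[OF Ls xy(1,2)] xy i by auto
  qed
next
  assume ac: "\<forall>i\<in>{1..d}. abs_cont (S i) (ps i) (Ms i) (Ls i)"
  show "abs_cont (prod_space d S) (tensor_mass d ps) (tensor_mat d Ms) (tensor_mat d Ls)"
    unfolding abs_cont_def
  proof (intro ballI impI)
    fix x y assume x: "x \<in> prod_space d S" and y: "y \<in> prod_space d S"
      and "0 < tensor_mass d ps x" "0 < tensor_mat d Ms x y"
    then have "0 < ps i (x i)" "0 < Ms i (x i) (y i)" if "i \<in> {1..d}" for i
      using that tensor_mass_pos_iff[OF ps x] tensor_mat_pos_iff[OF Ms x y] by auto
    then show "0 < tensor_mat d Ls x y"
      using ac prod_space_memD[OF x] prod_space_memD[OF y] tensor_mat_pos_iff[OF Ls x y]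
      by (auto simp: abs_cont_def)
  qed
qed

lemma sum_tensor_marginal:
  assumes fin: "\<forall>i\<in>{1..d}. finite (S i)"
    and Ms: "\<forall>i\<in>{1..d}. trans_mat (S i) (Ms i)" and ps: "\<forall>i\<in>{1..d}. prob_mass (S i) (ps i)"
    and i: "i \<in> {1..d}"
  shows "(\<Sum>x\<in>prod_space d S. \<Sum>y\<in>prod_space d S. tensor_mass d ps x * tensor_mat d Ms x y * g (x i) (y i))
       = (\<Sum>a\<in>S i. \<Sum>b\<in>S i. ps i a * Ms i a b * g a b)"
proof -
  define h where "h j a b = ps j a * Ms j a b * (if j = i then g a b else 1)" for j a b
  have "tensor_mass d ps x * tensor_mat d Ms x y * g (x i) (y i) = (\<Prod>j\<in>{1..d}. h j (x j) (y j))" for x y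
    unfolding h_def tensor_mass_def tensor_mat_def prod.distrib using i by (simp add: prod.delta)
  then have "(\<Sum>x\<in>prod_space d S. \<Sum>y\<in>prod_space d S. tensor_mass d ps x * tensor_mat d Ms x y * g (x i) (y i))
      = (\<Prod>j\<in>{1..d}. \<Sum>a\<in>S j. \<Sum>b\<in>S j. h j a b)"
    by (simp only: sum_sum_prod_space[OF fin])
  also have "\<dots> = (\<Prod>j\<in>{1..d}. if j = i then \<Sum>a\<in>S i. \<Sum>b\<in>S i. ps i a * Ms i a b * g a b else 1)"
  proof (rule prod.cong[OF refl])
    fix j assume j: "j \<in> {1..d}"
    have "(\<Sum>a\<in>S j. \<Sum>b\<in>S j. ps j a * Ms j a b) = 1"
      using Ms ps j by (simp add: trans_mat_def prob_mass_def flip: sum_distrib_left)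
    then show "(\<Sum>a\<in>S j. \<Sum>b\<in>S j. h j a b)
        = (if j = i then \<Sum>a\<in>S i. \<Sum>b\<in>S i. ps i a * Ms i a b * g a b else 1)"
      by (simp add: h_def)
  qed
  also have "\<dots> = (\<Sum>a\<in>S i. \<Sum>b\<in>S i. ps i a * Ms i a b * g a b)"
    using i by (simp add: prod.delta)
  finally show ?thesis .
qed

lemma sum_tensor_log_ratio:
  assumes fin: "\<forall>i\<in>{1..d}. finite (S i)"
    and Ms: "\<forall>i\<in>{1..d}. trans_mat (S i) (Ms i)" and ps: "\<forall>i\<in>{1..d}. prob_mass (S i) (ps i)"
    and ac: "\<forall>i\<in>{1..d}. abs_cont (S i) (ps i) (Ms i) (Ls i)"
  shows "(\<Sum>x\<in>prod_space d S. \<Sum>y\<in>prod_space d S.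
            tensor_mass d ps x * tensor_mat d Ms x y * ln (tensor_mat d Ms x y / tensor_mat d Ls x y))
       = (\<Sum>i\<in>{1..d}. \<Sum>a\<in>S i. \<Sum>b\<in>S i. ps i a * Ms i a b * ln (Ms i a b / Ls i a b))"
proof -
  define X where "X = prod_space d S"
  define P where "P = tensor_mass d ps"
  define TM where "TM = tensor_mat d Ms"
  have split: "P x * TM x y * ln (TM x y / tensor_mat d Ls x y)
      = (\<Sum>i\<in>{1..d}. P x * TM x y * ln (Ms i (x i) (y i) / Ls i (x i) (y i)))"
    if x: "x \<in> X" and y: "y \<in> X" for x y
  proof (cases "0 < P x \<and> 0 < TM x y")
    case True
    then have "0 < Ms i (x i) (y i) \<and> 0 < Ls i (x i) (y i)" if "i \<in> {1..d}" for i
      using ac tensor_mass_pos_iff[OF ps] tensor_mat_pos_iff[OF Ms] that x y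
        prod_space_memD[of x d S] prod_space_memD[of y d S]
      by (auto simp: abs_cont_def X_def P_def TM_def)
    then have "ln (TM x y / tensor_mat d Ls x y) = (\<Sum>i\<in>{1..d}. ln (Ms i (x i) (y i) / Ls i (x i) (y i)))"
      unfolding TM_def tensor_mat_def prod_dividef[symmetric]
      using ln_prod[of "{1..d}" "\<lambda>i. Ms i (x i) (y i) / Ls i (x i) (y i)"] by force
    then show ?thesis
      by (simp add: sum_distrib_left)
  next
    case False
    then have zero: "P x * TM x y = 0"
      using prob_mass_tensor_mass[OF fin ps] trans_mat_tensor_mat[OF fin Ms] x y
      by (auto simp: X_def P_def TM_def prob_mass_def trans_mat_def less_le)
    show ?thesis
      unfolding zero by simp
  qed
  have "(\<Sum>x\<in>X. \<Sum>y\<in>X. P x * TM x y * ln (TM x y / tensor_mat d Ls x y))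
      = (\<Sum>i\<in>{1..d}. \<Sum>x\<in>X. \<Sum>y\<in>X. P x * TM x y * ln (Ms i (x i) (y i) / Ls i (x i) (y i)))"
    using split by (simp only: sum.cong[OF refl sum.cong[OF refl split]] sum.swap[of _ X "{1..d}"])
  also have "\<dots> = (\<Sum>i\<in>{1..d}. \<Sum>a\<in>S i. \<Sum>b\<in>S i. ps i a * Ms i a b * ln (Ms i a b / Ls i a b))"
    unfolding X_def P_def TM_def by (intro sum.cong[OF refl] sum_tensor_marginal[OF fin Ms ps])
  finally show ?thesis
    by (simp add: X_def P_def TM_def)
qed

lemma fdiv_KL_tensor:
  assumes fin: "\<forall>i\<in>{1..d}. finite (S i)"
    and Ms: "\<forall>i\<in>{1..d}. trans_mat (S i) (Ms i)" and Ls: "\<forall>i\<in>{1..d}. trans_mat (S i) (Ls i)"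
    and ps: "\<forall>i\<in>{1..d}. prob_mass (S i) (ps i)"
  shows "fdiv KL_fun (prod_space d S) (tensor_mass d ps) (tensor_mat d Ms) (tensor_mat d Ls)
       = (\<Sum>i\<in>{1..d}. fdiv KL_fun (S i) (ps i) (Ms i) (Ls i))"
proof (cases "\<forall>i\<in>{1..d}. abs_cont (S i) (ps i) (Ms i) (Ls i)")
  case True
  then show ?thesis
    using prob_mass_tensor_mass[OF fin ps] trans_mat_tensor_mat[OF fin Ms] Ms ps
    by (simp add: fdiv_KL_abs_cont abs_cont_tensor_iff[OF Ms Ls ps] sum_tensor_log_ratio[OF fin Ms ps]
        prob_mass_def trans_mat_def)
next
  case False
  then obtain i where i: "i \<in> {1..d}" "\<not> abs_cont (S i) (ps i) (Ms i) (Ls i)"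
    by blast
  then have "fdiv KL_fun (S i) (ps i) (Ms i) (Ls i) = \<infinity>"
    using fin ps Ls by (intro fdiv_KL_not_abs_cont) (auto simp: prob_mass_def trans_mat_def)
  then have "(\<Sum>i\<in>{1..d}. fdiv KL_fun (S i) (ps i) (Ms i) (Ls i)) = \<infinity>"
    using i by (auto simp: sum_Pinfty)
  moreover have "fdiv KL_fun (prod_space d S) (tensor_mass d ps) (tensor_mat d Ms) (tensor_mat d Ls) = \<infinity>"
    using False prob_mass_tensor_mass[OF fin ps] trans_mat_tensor_mat[OF fin Ls] finite_prod_space[OF fin]
    by (intro fdiv_KL_not_abs_cont) (auto simp: abs_cont_tensor_iff[OF Ms Ls ps] prob_mass_def trans_mat_def)
  ultimately show ?thesis
    by simp
qed

section \<open>Bisection\<close>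

lemma fdiv_tensor_time_rev:
  assumes fin: "\<forall>i\<in>{1..d}. finite (S i)"
    and M: "trans_mat (prod_space d S) M" and Ls: "\<forall>i\<in>{1..d}. trans_mat (S i) (Ls i)"
    and ps: "\<forall>i\<in>{1..d}. prob_mass (S i) (ps i)"
    and stM: "stationary (prod_space d S) (tensor_mass d ps) M"
    and stL: "\<forall>i\<in>{1..d}. stationary (S i) (ps i) (Ls i)"
  shows "fdiv f (prod_space d S) (tensor_mass d ps) M (tensor_mat d Ls)
       = fdiv f (prod_space d S) (tensor_mass d ps) (time_rev (tensor_mass d ps) M)
           (tensor_mat d (\<lambda>i. time_rev (ps i) (Ls i)))"
  unfolding tensor_mat_time_rev
proof (rule fdiv_time_rev[OF finite_prod_space[OF fin] _ _ _ stM stationary_tensor[OF fin stL]])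
  show "\<forall>x\<in>prod_space d S. 0 \<le> tensor_mass d ps x"
    using prob_mass_tensor_mass[OF fin ps] by (simp add: prob_mass_def)
  show "\<forall>x\<in>prod_space d S. \<forall>y\<in>prod_space d S. 0 \<le> M x y"
    "\<forall>x\<in>prod_space d S. \<forall>y\<in>prod_space d S. 0 \<le> tensor_mat d Ls x y"
    using M trans_mat_tensor_mat[OF fin Ls] by (simp_all add: trans_mat_def)
qed

lemma fdiv_tensor_time_rev_reversible:
  assumes fin: "\<forall>i\<in>{1..d}. finite (S i)"
    and M: "trans_mat (prod_space d S) M" and Ls: "\<forall>i\<in>{1..d}. trans_mat (S i) (Ls i)"
    and ps: "\<forall>i\<in>{1..d}. prob_mass (S i) (ps i)"
    and stM: "stationary (prod_space d S) (tensor_mass d ps) M"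
    and rev: "\<forall>i\<in>{1..d}. reversible (S i) (ps i) (Ls i)"
  shows "fdiv f (prod_space d S) (tensor_mass d ps) M (tensor_mat d Ls)
       = fdiv f (prod_space d S) (tensor_mass d ps) (time_rev (tensor_mass d ps) M) (tensor_mat d Ls)"
proof -
  have "\<forall>i\<in>{1..d}. stationary (S i) (ps i) (Ls i)"
    using Ls rev by (simp add: reversible_imp_stationary)
  then have "fdiv f (prod_space d S) (tensor_mass d ps) M (tensor_mat d Ls)
      = fdiv f (prod_space d S) (tensor_mass d ps) (time_rev (tensor_mass d ps) M)
          (time_rev (tensor_mass d ps) (tensor_mat d Ls))"
    using fdiv_tensor_time_rev[OF fin M Ls ps stM] by (simp add: tensor_mat_time_rev)
  also have "\<dots> = fdiv f (prod_space d S) (tensor_mass d ps) (time_rev (tensor_mass d ps) M) (tensor_mat d Ls)"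
    using time_rev_reversible[OF reversible_tensor[OF rev]] by (intro fdiv_cong) auto
  finally show ?thesis .
qed

theorem proposition2p3:
  fixes d :: nat
    and S :: "nat \<Rightarrow> 'a set"
    and \<pi> :: "(nat \<Rightarrow> 'a) \<Rightarrow> real"
    and M :: "(nat \<Rightarrow> 'a) \<Rightarrow> (nat \<Rightarrow> 'a) \<Rightarrow> real"
    and Ms Ls :: "nat \<Rightarrow> 'a \<Rightarrow> 'a \<Rightarrow> real"
    and f :: "real \<Rightarrow> real"
  assumes d_pos: "1 \<le> d"
    and fin: "\<forall>i\<in>{1..d}. finite (S i)"
    and pi: "prob_mass (prod_space d S) \<pi>"
    and M: "trans_mat (prod_space d S) M"
    and Ms: "\<forall>i\<in>{1..d}. trans_mat (S i) (Ms i)"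
    and Ls: "\<forall>i\<in>{1..d}. trans_mat (S i) (Ls i)"
    and f_conv: "convex_on {0..} f"
    and f1: "f 1 = 0"
  shows
    "(fdiv f (prod_space d S) \<pi> M (tensor_mat d Ls) \<ge> 0 \<and>
      ((\<forall>x\<in>prod_space d S. \<pi> x > 0) \<and> strictly_convex_at_1 f \<longrightarrow>
         (fdiv f (prod_space d S) \<pi> M (tensor_mat d Ls) = 0 \<longleftrightarrow>
          (\<forall>x\<in>prod_space d S. \<forall>y\<in>prod_space d S. M x y = tensor_mat d Ls x y))))
   \<and>
    (\<forall>M1 M2 t. trans_mat (prod_space d S) M1 \<and> trans_mat (prod_space d S) M2 \<and>
        0 \<le> t \<and> t \<le> 1 \<longrightarrow>
        fdiv f (prod_space d S) \<pi> (\<lambda>x y. t * M1 x y + (1 - t) * M2 x y) (tensor_mat d Ls)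
        \<le> ereal t * fdiv f (prod_space d S) \<pi> M1 (tensor_mat d Ls)
           + ereal (1 - t) * fdiv f (prod_space d S) \<pi> M2 (tensor_mat d Ls))
   \<and>
    (\<forall>\<pi>s. (\<forall>i\<in>{1..d}. prob_mass (S i) (\<pi>s i)) \<longrightarrow>
       fdiv KL_fun (prod_space d S) (tensor_mass d \<pi>s) (tensor_mat d Ms) (tensor_mat d Ls)
       = (\<Sum>i\<in>{1..d}. fdiv KL_fun (S i) (\<pi>s i) (Ms i) (Ls i)))
   \<and>
    (\<forall>\<pi>s. (\<forall>i\<in>{1..d}. prob_mass (S i) (\<pi>s i)) \<longrightarrow>
       Max ((\<lambda>i. fdiv hellinger_fun (S i) (\<pi>s i) (Ms i) (Ls i)) ` {1..d})
         \<le> fdiv hellinger_fun (prod_space d S) (tensor_mass d \<pi>s) (tensor_mat d Ms) (tensor_mat d Ls)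
       \<and> fdiv hellinger_fun (prod_space d S) (tensor_mass d \<pi>s) (tensor_mat d Ms) (tensor_mat d Ls)
         \<le> (\<Sum>i\<in>{1..d}. fdiv hellinger_fun (S i) (\<pi>s i) (Ms i) (Ls i)))
   \<and>
    (\<forall>\<pi>s. (\<forall>i\<in>{1..d}. prob_mass (S i) (\<pi>s i)) \<and> \<pi> = tensor_mass d \<pi>s
        \<and> stationary (prod_space d S) \<pi> M \<longrightarrow>
       ((\<forall>i\<in>{1..d}. stationary (S i) (\<pi>s i) (Ls i)) \<longrightarrow>
          fdiv f (prod_space d S) \<pi> M (tensor_mat d Ls)
          = fdiv f (prod_space d S) \<pi> (time_rev \<pi> M) (tensor_mat d (\<lambda>i. time_rev (\<pi>s i) (Ls i))))
     \<and> ((\<forall>i\<in>{1..d}. reversible (S i) (\<pi>s i) (Ls i)) \<longrightarrow>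
          fdiv f (prod_space d S) \<pi> M (tensor_mat d Ls)
          = fdiv f (prod_space d S) \<pi> (time_rev \<pi> M) (tensor_mat d Ls)))"
proof -
  have X: "finite (prod_space d S)"
    by (rule finite_prod_space[OF fin])
  have \<pi>_nonneg: "\<forall>x\<in>prod_space d S. 0 \<le> \<pi> x"
    using pi by (simp add: prob_mass_def)
  have TL: "trans_mat (prod_space d S) (tensor_mat d Ls)"
    by (rule trans_mat_tensor_mat[OF fin Ls])
  then have TL_nonneg: "\<forall>x\<in>prod_space d S. \<forall>y\<in>prod_space d S. 0 \<le> tensor_mat d Ls x y"
    by (simp add: trans_mat_def)
  show ?thesis
    using fdiv_nonneg[OF f_conv f1 X \<pi>_nonneg M TL]
      fdiv_eq_0_iff[OF f_conv f1 _ X _ M TL]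
      fdiv_convex[OF f_conv \<pi>_nonneg _ _ TL_nonneg]
      fdiv_KL_tensor[OF fin Ms Ls]
      fdiv_hellinger_tensor_bounds[OF d_pos fin Ms Ls]
      fdiv_tensor_time_rev[OF fin M Ls] fdiv_tensor_time_rev_reversible[OF fin M Ls]
    by blast
qed

end
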